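(* Let $G$ be a group acting sharply $k$-transitively on a finite set $X$ with $n$ elements, where $k\ge 1$. Let $\mathbf{x}=(x_1,\ldots,x_n)$ be a sequencing of the $G$-set $X$. Then the orbit of $\mathbf{x}$ under $G$, namely the collection of sequences $(gx_1,\ldots,gx_n)$ for $g\in G$, forms an $(n,k+1)$-permutation design.
   Context: For a $G$-set $X$ and an integer $m\ge1$, $X^{(m)}\subseteq X^m$ denotes the set of ordered $m$-tuples of distinct elements of $X$, with $G$ acting coordinatewise. The action of $G$ on $X$ is sharply $k$-transitive if for any $(x_1,\ldots,x_k),(y_1,\ldots,y_k)\in X^{(k)}$ there is exactly one $g\in G$ with $gx_i=y_i$ for all $i$. A sequencing of a sharply $k$-transitive $G$-set $X$ with $n$ elements is an enumeration $(x_1,\ldots,x_n)$ of the elements of $X$ (each element appearing exactly once) such that the $n-k$ tuples $(x_1,\ldots,x_{k+1}),(x_2,\ldots,x_{k+2}),\ldots,(x_{n-k},\ldots,x_n)$ lie in pairwise distinct orbits of $G$ acting on $X^{(k+1)}$. For integers $n\ge t\ge1$, write $n^{\underline{t}}=n(n-1)\cdots(n-t+1)$. An $(n,t)$-permutation design is a set of $n^{\underline{t-1}}$ permutations of an $n$-set (each written as a sequence listing all $n$ elements) such that every ordered $t$-tuple of distinct elements of the set occurs exactly once as a contiguous subsequence of one of the permutations. *)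

theory Defs
  imports "HOL-Algebra.Group_Action"
begin

definition dtuples :: "'b set \<Rightarrow> nat \<Rightarrow> 'b list set" where
  "dtuples X m = {xs. length xs = m \<and> distinct xs \<and> set xs \<subseteq> X}"

definition falling :: "nat \<Rightarrow> nat \<Rightarrow> nat" where
  "falling n t = (\<Prod>i<t. n - i)"

definition sharply_k_transitive ::
  "('a, 'c) monoid_scheme \<Rightarrow> 'b set \<Rightarrow> ('a \<Rightarrow> 'b \<Rightarrow> 'b) \<Rightarrow> nat \<Rightarrow> bool" where
  "sharply_k_transitive G X \<phi> k \<longleftrightarrow> group_action G X \<phi> \<and>
     (\<forall>xs\<in>dtuples X k. \<forall>ys\<in>dtuples X k. \<exists>!g. g \<in> carrier G \<and> map (\<phi> g) xs = ys)"

definition same_orbit ::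
  "('a, 'c) monoid_scheme \<Rightarrow> ('a \<Rightarrow> 'b \<Rightarrow> 'b) \<Rightarrow> 'b list \<Rightarrow> 'b list \<Rightarrow> bool" where
  "same_orbit G \<phi> u v \<longleftrightarrow> (\<exists>g\<in>carrier G. map (\<phi> g) u = v)"

(* the i-th window (x_{i+1},...,x_{i+m}) (0-based i) *)
definition window :: "'b list \<Rightarrow> nat \<Rightarrow> nat \<Rightarrow> 'b list" where
  "window xs i m = take m (drop i xs)"

definition sequencing ::
  "('a, 'c) monoid_scheme \<Rightarrow> 'b set \<Rightarrow> ('a \<Rightarrow> 'b \<Rightarrow> 'b) \<Rightarrow> nat \<Rightarrow> 'b list \<Rightarrow> bool" where
  "sequencing G X \<phi> k xs \<longleftrightarrow> distinct xs \<and> set xs = X \<and>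
     (\<forall>i j. i < j \<and> j < length xs - k \<longrightarrow>
        \<not> same_orbit G \<phi> (window xs i (k+1)) (window xs j (k+1)))"

definition perm_design :: "'b set \<Rightarrow> nat \<Rightarrow> 'b list set \<Rightarrow> bool" where
  "perm_design X t P \<longleftrightarrow> finite P \<and>
     card P = falling (card X) (t - 1) \<and>
     (\<forall>p\<in>P. distinct p \<and> set p = X) \<and>
     (\<forall>u\<in>dtuples X t. card {(p, i). p \<in> P \<and> i + t \<le> length p \<and> window p i t = u} = 1)"

end

theory Submission
  imports Defs
begin

text \<open>
  Sharp \<open>k\<close>-transitivity makes \<open>g \<mapsto> g(x\<^sub>1, \<dots>, x\<^sub>k)\<close> a bijection from \<open>G\<close> onto the
  \<open>k\<close>-tuples of distinct elements, so \<open>|G| = n(n-1)\<cdots>(n-k+1)\<close> and \<open>G\<close> acts freely on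
  tuples of length at least \<open>k\<close>. Hence \<open>(g, i) \<mapsto> g(x\<^sub>i\<^sub>+\<^sub>1, \<dots>, x\<^sub>i\<^sub>+\<^sub>k\<^sub>+\<^sub>1)\<close> is injective on
  \<open>G \<times> {0, \<dots>, n-k-1}\<close>: for equal \<open>i\<close> by freeness, for distinct \<open>i\<close> because the windows of a
  sequencing lie in distinct orbits. Its domain has \<open>n(n-1)\<cdots>(n-k)\<close> elements, as many as there
  are \<open>(k+1)\<close>-tuples of distinct elements, so every such tuple occurs exactly once as a window of
  exactly one of the permutations \<open>gx\<close>.
\<close>

lemma falling_Suc: "falling n (Suc m) = falling n m * (n - m)"
  by (simp add: falling_def)

lemma falling_eq_0: "n < m \<Longrightarrow> falling n m = 0"
  unfolding falling_def by (rule prod_zero) auto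

lemma falling_eq_prod_atLeastAtMost: "m \<le> n \<Longrightarrow> falling n m = \<Prod>{n - m + 1..n}"
proof (induction m)
  case 0
  then show ?case by (simp add: falling_def)
next
  case (Suc m)
  have split: "{n - Suc m + 1..n} = insert (n - m) {n - m + 1..n}"
    using Suc.prems by auto
  have "falling n (Suc m) = (n - m) * falling n m" by (simp add: falling_def)
  also have "\<dots> = (n - m) * \<Prod>{n - m + 1..n}" using Suc by simp
  also have "\<dots> = \<Prod>{n - Suc m + 1..n}" unfolding split by (subst prod.insert) auto
  finally show ?case .
qed

lemma finite_dtuples: "finite X \<Longrightarrow> finite (dtuples X m)"
  unfolding dtuples_def
  by (rule finite_subset[OF _ finite_lists_length_eq[of X m]]) auto

lemma dtuples_eq_empty:
  assumes "finite X" "card X < m"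
  shows "dtuples X m = {}"
proof (rule equals0I)
  fix w assume "w \<in> dtuples X m"
  then have "card (set w) = m" "set w \<subseteq> X" unfolding dtuples_def by (auto simp: distinct_card)
  then show False using card_mono[OF assms(1), of "set w"] assms(2) by linarith
qed

lemma card_dtuples:
  assumes "finite X"
  shows "card (dtuples X m) = falling (card X) m"
proof (cases "m \<le> card X")
  case True
  have "card (dtuples X m) = \<Prod>{card X - m + 1..card X}"
    unfolding dtuples_def by (rule card_lists_distinct_length_eq[OF assms True])
  also have "\<dots> = falling (card X) m"
    by (rule falling_eq_prod_atLeastAtMost[OF True, symmetric])
  finally show ?thesis .
next
  case False
  then have "card X < m" by simp
  then show ?thesis by (simp only: dtuples_eq_empty[OF assms] falling_eq_0 card.empty)
qed

lemma window_in_dtuples: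
  assumes "distinct xs" "set xs = X" "i + m \<le> length xs"
  shows "window xs i m \<in> dtuples X m"
  using assms unfolding dtuples_def window_def
  by (auto dest: in_set_takeD in_set_dropD)

lemma window_map: "window (map f xs) i m = map f (window xs i m)"
  unfolding window_def by (simp add: take_map drop_map)

lemma window_occurrences_eq_image:
  "{(p, i). p \<in> (\<lambda>g. map (f g) xs) ` A \<and> i + (t + 1) \<le> length p \<and> window p i (t + 1) = u} =
    (\<lambda>(g, i). (map (f g) xs, i)) `
      {a \<in> A \<times> {..<length xs - t}. (\<lambda>(g, i). map (f g) (window xs i (t + 1))) a = u}"
  by (auto simp: window_map image_iff)

lemma bij_betw_card_fiber:
  assumes "bij_betw f A B" "b \<in> B"
  shows "card {a \<in> A. f a = b} = 1"
proof -
  obtain a where a: "a \<in> A" "f a = b"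
    using assms unfolding bij_betw_def by blast
  have "{a \<in> A. f a = b} = {a}"
    using a bij_betw_imp_inj_on[OF assms(1)] by (auto dest: inj_onD)
  then show ?thesis by simp
qed

context group_action
begin

lemma map_in_dtuples:
  assumes "g \<in> carrier G" "w \<in> dtuples E m"
  shows "map (\<phi> g) w \<in> dtuples E m"
  using assms inj_prop[OF assms(1)] surj_prop[OF assms(1)] unfolding dtuples_def
  by (auto simp: distinct_map inj_on_subset)

lemma map_permutation:
  assumes "g \<in> carrier G" "distinct xs" "set xs = E"
  shows "distinct (map (\<phi> g) xs) \<and> set (map (\<phi> g) xs) = E"
  using assms inj_prop[OF assms(1)] surj_prop[OF assms(1)] by (simp add: distinct_map)

lemma same_orbit_if_map_eq:
  assumes g: "g \<in> carrier G" and h: "h \<in> carrier G"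
    and "set u \<subseteq> E" "set v \<subseteq> E" and eq: "map (\<phi> g) u = map (\<phi> h) v"
  shows "same_orbit G \<phi> u v"
proof -
  interpret group G
    using group_hom group_hom.axioms(1) by auto
  have "map (\<phi> (inv h \<otimes> g)) u = map (\<phi> (inv h)) (map (\<phi> g) u)"
    using \<open>set u \<subseteq> E\<close> g h by (auto simp: composition_rule)
  also have "\<dots> = map (\<phi> (inv h)) (map (\<phi> h) v)"
    by (simp add: eq)
  also have "\<dots> = v"
    unfolding map_map
    by (rule map_idI) (use \<open>set v \<subseteq> E\<close> orbit_sym_aux[OF h _ refl] in auto)
  finally show ?thesis
    unfolding same_orbit_def using g h by blast
qed

end

lemma sharply_k_transitive_group_action:
  "sharply_k_transitive G X \<phi> k \<Longrightarrow> group_action G X \<phi>"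
  unfolding sharply_k_transitive_def by blast

lemma length_sequencing: "sequencing G X \<phi> k xs \<Longrightarrow> length xs = card X"
  unfolding sequencing_def using distinct_card by metis

lemma sequencing_in_dtuples: "sequencing G X \<phi> k xs \<Longrightarrow> xs \<in> dtuples X (card X)"
  using length_sequencing unfolding sequencing_def dtuples_def by blast

lemma sharply_k_transitive_free:
  assumes trans: "sharply_k_transitive G X \<phi> k"
    and g: "g \<in> carrier G" and h: "h \<in> carrier G" and w: "w \<in> dtuples X m" and "k \<le> m"
    and eq: "map (\<phi> g) w = map (\<phi> h) w"
  shows "g = h"
proof -
  have prefix: "take k w \<in> dtuples X k"
    using w \<open>k \<le> m\<close> unfolding dtuples_def by (auto dest: in_set_takeD)
  have "map (\<phi> h) (take k w) = map (\<phi> g) (take k w)"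
    using arg_cong[OF eq, of "take k"] by (simp add: take_map)
  moreover have "map (\<phi> g) (take k w) \<in> dtuples X k"
    using group_action.map_in_dtuples[OF sharply_k_transitive_group_action[OF trans] g prefix] .
  ultimately show ?thesis
    using trans prefix g h unfolding sharply_k_transitive_def by blast
qed

lemma sharply_k_transitive_inj_on_orbit:
  assumes "sharply_k_transitive G X \<phi> k" "w \<in> dtuples X m" "k \<le> m"
  shows "inj_on (\<lambda>g. map (\<phi> g) w) (carrier G)"
  using sharply_k_transitive_free[OF assms(1) _ _ assms(2,3)] by (rule inj_onI)

lemma sharply_k_transitive_bij_betw:
  assumes trans: "sharply_k_transitive G X \<phi> k" and x: "x \<in> dtuples X k"
  shows "bij_betw (\<lambda>g. map (\<phi> g) x) (carrier G) (dtuples X k)"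
proof (rule bij_betw_imageI)
  show "inj_on (\<lambda>g. map (\<phi> g) x) (carrier G)"
    using sharply_k_transitive_inj_on_orbit[OF trans x order_refl] .
  have "\<exists>g\<in>carrier G. y = map (\<phi> g) x" if "y \<in> dtuples X k" for y
    using trans x that unfolding sharply_k_transitive_def by (metis (mono_tags, lifting))
  then show "(\<lambda>g. map (\<phi> g) x) ` carrier G = dtuples X k"
    using group_action.map_in_dtuples[OF sharply_k_transitive_group_action[OF trans] _ x] by blast
qed

lemma sharply_k_transitive_card_carrier:
  assumes "sharply_k_transitive G X \<phi> k" "finite X" "x \<in> dtuples X k"
  shows "finite (carrier G)" and "card (carrier G) = falling (card X) k"
proof -
  have bij: "bij_betw (\<lambda>g. map (\<phi> g) x) (carrier G) (dtuples X k)"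
    using sharply_k_transitive_bij_betw[OF assms(1,3)] .
  show "finite (carrier G)"
    using bij_betw_finite[OF bij] finite_dtuples[OF assms(2)] by blast
  show "card (carrier G) = falling (card X) k"
    using bij_betw_same_card[OF bij] card_dtuples[OF assms(2)] by simp
qed

lemma sequencing_prefix_in_dtuples:
  assumes "sequencing G X \<phi> k xs" "k \<le> card X"
  shows "take k xs \<in> dtuples X k"
  using assms window_in_dtuples[of xs X 0 k] length_sequencing[OF assms(1)]
  unfolding sequencing_def by (simp add: window_def)

lemma sequencing_window_images_inj:
  assumes trans: "sharply_k_transitive G X \<phi> k" and seq: "sequencing G X \<phi> k xs"
  shows "inj_on (\<lambda>(g, i). map (\<phi> g) (window xs i (k + 1))) (carrier G \<times> {..<length xs - k})"
proof (rule inj_onI, clarify)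
  note action = sharply_k_transitive_group_action[OF trans]
  have distinct: "distinct xs" and set: "set xs = X"
    and distinct_orbits: "\<And>i j. i < j \<Longrightarrow> j < length xs - k \<Longrightarrow>
      \<not> same_orbit G \<phi> (window xs i (k + 1)) (window xs j (k + 1))"
    using seq unfolding sequencing_def by blast+
  have window: "window xs i (k + 1) \<in> dtuples X (k + 1)" if "i < length xs - k" for i
    using window_in_dtuples[OF distinct set] that by simp
  then have window_subset: "set (window xs i (k + 1)) \<subseteq> X" if "i < length xs - k" for i
    using that unfolding dtuples_def by blast
  fix g i h j
  assume g: "g \<in> carrier G" and h: "h \<in> carrier G"
    and i: "i < length xs - k" and j: "j < length xs - k"
    and eq: "map (\<phi> g) (window xs i (k + 1)) = map (\<phi> h) (window xs j (k + 1))"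
  have "i = j"
  proof (rule linorder_cases[of i j])
    assume "i < j"
    moreover have "same_orbit G \<phi> (window xs i (k + 1)) (window xs j (k + 1))"
      using group_action.same_orbit_if_map_eq[OF action g h window_subset[OF i] window_subset[OF j] eq] .
    ultimately show ?thesis using distinct_orbits j by blast
  next
    assume "j < i"
    moreover have "same_orbit G \<phi> (window xs j (k + 1)) (window xs i (k + 1))"
      using group_action.same_orbit_if_map_eq[OF action h g window_subset[OF j] window_subset[OF i] eq[symmetric]] .
    ultimately show ?thesis using distinct_orbits i by blast
  qed
  moreover have "g = h"
    using sharply_k_transitive_free[OF trans g h window[OF i] le_add1] eq \<open>i = j\<close> by simp
  ultimately show "g = h \<and> i = j" by blast
qed

lemma sequencing_window_images_bij:
  assumes trans: "sharply_k_transitive G X \<phi> k" and seq: "sequencing G X \<phi> k xs"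
    and "finite X" "k \<le> card X"
  shows "bij_betw (\<lambda>(g, i). map (\<phi> g) (window xs i (k + 1)))
    (carrier G \<times> {..<card X - k}) (dtuples X (k + 1))"
    (is "bij_betw ?H ?D _")
proof (rule bij_betw_imageI)
  note len = length_sequencing[OF seq]
  note carrier = sharply_k_transitive_card_carrier[OF trans \<open>finite X\<close>
      sequencing_prefix_in_dtuples[OF seq assms(4)]]
  show inj: "inj_on ?H ?D"
    using sequencing_window_images_inj[OF trans seq] len by simp
  have "?H ` ?D \<subseteq> dtuples X (k + 1)"
    using seq group_action.map_in_dtuples[OF sharply_k_transitive_group_action[OF trans]]
      window_in_dtuples[of xs X] len unfolding sequencing_def by auto
  moreover have "card (?H ` ?D) = card (dtuples X (k + 1))"
    using card_image[OF inj] carrier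
    by (simp add: card_cartesian_product card_dtuples[OF \<open>finite X\<close>] falling_Suc)
  ultimately show "?H ` ?D = dtuples X (k + 1)"
    using card_subset_eq[OF finite_dtuples[OF \<open>finite X\<close>]] by blast
qed

lemma sequencing_window_occurrences:
  assumes trans: "sharply_k_transitive G X \<phi> k" and seq: "sequencing G X \<phi> k xs"
    and "finite X" "k \<le> card X" and u: "u \<in> dtuples X (k + 1)"
  shows "card {(p, i). p \<in> (\<lambda>g. map (\<phi> g) xs) ` carrier G \<and>
    i + (k + 1) \<le> length p \<and> window p i (k + 1) = u} = 1"
proof -
  note inj_orbit =
    sharply_k_transitive_inj_on_orbit[OF trans sequencing_in_dtuples[OF seq] assms(4)]
  have "inj_on (\<lambda>(g, i). (map (\<phi> g) xs, i)) (carrier G \<times> {..<card X - k})"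
    using inj_orbit by (auto simp: inj_on_def)
  then show ?thesis
    unfolding window_occurrences_eq_image length_sequencing[OF seq]
    using bij_betw_card_fiber[OF sequencing_window_images_bij[OF trans seq assms(3,4)] u]
    by (subst card_image) (auto intro: inj_on_subset)
qed

theorem theorem3p1:
  fixes G :: "('a, 'c) monoid_scheme" and X :: "'b set" and \<phi> :: "'a \<Rightarrow> 'b \<Rightarrow> 'b"
    and k :: nat and xs :: "'b list"
  assumes "finite X" and "1 \<le> k" and "k \<le> card X"
    and "sharply_k_transitive G X \<phi> k"
    and "sequencing G X \<phi> k xs"
  shows "perm_design X (k + 1) {map (\<phi> g) xs | g. g \<in> carrier G}"
proof -
  have distinct: "distinct xs" and set: "set xs = X"
    using assms(5) unfolding sequencing_def by blast+
  note inj_orbit =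
    sharply_k_transitive_inj_on_orbit[OF assms(4) sequencing_in_dtuples[OF assms(5)] assms(3)]
  note carrier = sharply_k_transitive_card_carrier[OF assms(4,1)
      sequencing_prefix_in_dtuples[OF assms(5,3)]]
  have "{map (\<phi> g) xs | g. g \<in> carrier G} = (\<lambda>g. map (\<phi> g) xs) ` carrier G"
    by blast
  then show ?thesis
    unfolding perm_design_def
    using carrier card_image[OF inj_orbit] sequencing_window_occurrences[OF assms(4,5,1,3)]
      group_action.map_permutation[OF sharply_k_transitive_group_action[OF assms(4)] _ distinct set]
    by auto
qed

end
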